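(* Let $\phi(z)\in\mathbb{R}[z]$ be a cubic polynomial with positive lead coefficient. If $\phi$ has precisely one real fixed point $\gamma\in\mathbb{R}$, then $\mathfrak{K}_\infty\cap\mathbb{R}=\{\gamma\}$.
   Context: The (archimedean) filled Julia set of $\phi$ is $\mathfrak{K}_\infty=\{x\in\mathbb{C}:\{|\phi^n(x)|:n\ge0\}\text{ is bounded}\}$, where $\phi^n$ is the $n$-th iterate of $\phi$. *)

theory Defs
  imports "HOL-Analysis.Analysis" "HOL-Computational_Algebra.Polynomial"
begin

definition filled_julia :: "complex poly \<Rightarrow> complex set" where
  "filled_julia q = {x. bounded (range (\<lambda>n. cmod ((poly q ^^ n) x)))}"

end

theory Submission
  imports Defs
begin

text \<open>
  Since \<phi> has odd degree, positive leading coefficient and \<gamma> is the only root of \<phi>(x) - x,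
  we get \<phi>(x) > x for x > \<gamma> and \<phi>(x) < x for x < \<gamma>. Hence a real orbit starting off \<gamma>
  is strictly monotone; were it bounded, it would converge, and by continuity its limit
  would be a second real fixed point.
\<close>

lemma poly_map_poly_of_real:
  "poly (map_poly of_real p) (of_real x :: 'a :: {comm_ring_1, real_algebra_1}) = of_real (poly p x)"
  by (induction p) (auto simp: map_poly_pCons)

lemma funpow_semiconj:
  assumes "\<And>x. h (f x) = g (h x)"
  shows "h ((f ^^ n) x) = (g ^^ n) (h x)"
  by (induction n) (simp_all add: assms)

lemma of_real_in_filled_julia_iff:
  "complex_of_real x \<in> filled_julia (map_poly complex_of_real p) \<longleftrightarrow> Bseq (\<lambda>n. (poly p ^^ n) x)"
proof -
  have "(poly (map_poly complex_of_real p) ^^ n) (complex_of_real x) = complex_of_real ((poly p ^^ n) x)"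
    for n by (rule funpow_semiconj [symmetric]) (simp add: poly_map_poly_of_real)
  then show ?thesis
    by (simp add: filled_julia_def Elementary_Normed_Spaces.Bseq_eq_bounded bounded_iff)
qed

lemma poly_pos_above_roots:
  fixes p :: "real poly"
  assumes "lead_coeff p > 0" and "\<forall>y>\<gamma>. poly p y \<noteq> 0" and "x > \<gamma>"
  shows "poly p x > 0"
proof (rule ccontr)
  assume "\<not> poly p x > 0"
  with assms have neg: "poly p x < 0" by force
  obtain n where n: "\<forall>y\<ge>n. poly p y \<ge> lead_coeff p"
    using poly_pinfty_gt_lc [OF assms(1)] by blast
  define b where "b = max n (x + 1)"
  have "poly p b > 0" "x < b"
    using n assms(1) by (auto simp: b_def intro: order_less_le_trans)
  then obtain z where "x < z" "poly p z = 0"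
    using poly_IVT_pos [OF _ neg] by blast
  with assms show False by auto
qed

lemma poly_neg_below_roots:
  fixes p :: "real poly"
  assumes "odd (degree p)" and "lead_coeff p > 0" and "\<forall>y<\<gamma>. poly p y \<noteq> 0" and "x < \<gamma>"
  shows "poly p x < 0"
proof -
  define q where "q = - (p \<circ>\<^sub>p [:0, -1:])"
  have poly_q: "poly q y = - poly p (- y)" for y
    by (simp add: q_def poly_pcompose)
  have "lead_coeff q = lead_coeff p"
    using lead_coeff_comp [of "[:0, -1::real:]" p] assms(1) by (simp add: q_def lead_coeff_minus)
  then have "poly q (- x) > 0"
    using assms by (intro poly_pos_above_roots [of q "- \<gamma>"]) (auto simp: poly_q)
  then show ?thesis by (simp add: poly_q)
qed

lemma orbit_unbounded_above:
  fixes f :: "real \<Rightarrow> real"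
  assumes cont: "\<And>y. isCont f y" and up: "\<forall>y>\<gamma>. f y > y" and "x > \<gamma>"
  shows "\<not> Bseq (\<lambda>n. (f ^^ n) x)"
proof
  define s where "s = (\<lambda>n. (f ^^ n) x)"
  assume "Bseq (\<lambda>n. (f ^^ n) x)"
  then have "Bseq s" by (simp add: s_def)
  have s_Suc: "s (Suc n) = f (s n)" for n by (simp add: s_def)
  have above: "s n > \<gamma>" for n
    by (induction n) (use assms(3) up s_Suc s_def in \<open>auto intro: less_trans\<close>)
  have "incseq s"
    using above up s_Suc by (intro incseq_SucI) (simp add: less_imp_le)
  then obtain L where L: "s \<longlonglongrightarrow> L"
    using Bseq_mono_convergent [OF \<open>Bseq s\<close>] by (auto simp: incseq_def convergent_def)
  have "(\<lambda>n. s (Suc n)) \<longlonglongrightarrow> f L"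
    unfolding s_Suc using L isCont_tendsto_compose [OF cont] by blast
  then have "f L = L" using LIMSEQ_Suc [OF L] LIMSEQ_unique by blast
  moreover have "L > \<gamma>"
    using above [of 0] incseq_le [OF \<open>incseq s\<close> L, of 0] by simp
  ultimately show False using up by fastforce
qed

lemma orbit_unbounded_below:
  fixes f :: "real \<Rightarrow> real"
  assumes "\<And>y. isCont f y" and "\<forall>y<\<gamma>. f y < y" and "x < \<gamma>"
  shows "\<not> Bseq (\<lambda>n. (f ^^ n) x)"
proof -
  define g where "g y = - f (- y)" for y
  have "isCont g y" for y
    unfolding g_def by (intro isCont_minus isCont_o2 [OF _ assms(1)] continuous_intros)
  moreover have "\<forall>y>- \<gamma>. g y > y"
    using assms(2) by (auto simp: g_def) (metis neg_less_iff_less minus_less_iff)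
  ultimately have "\<not> Bseq (\<lambda>n. (g ^^ n) (- x))"
    using assms(3) by (intro orbit_unbounded_above [of g "- \<gamma>"]) auto
  moreover have "(g ^^ n) (- x) = - (f ^^ n) x" for n
    by (rule funpow_semiconj [symmetric]) (simp add: g_def)
  ultimately show ?thesis by (simp add: Bseq_minus_iff)
qed

theorem lemma4p9:
  fixes \<phi> :: "real poly" and \<gamma> :: real
  assumes "degree \<phi> = 3"
    and "lead_coeff \<phi> > 0"
    and "{x::real. poly \<phi> x = x} = {\<gamma>}"
  shows "filled_julia (map_poly complex_of_real \<phi>) \<inter> \<real> = {complex_of_real \<gamma>}"
proof -
  define g where "g = \<phi> - [:0, 1:]"
  have "degree g = 3" "lead_coeff g = lead_coeff \<phi>"
    using assms(1) by (simp_all add: g_def diff_conv_add_uminus degree_add_eq_left numeral_3_eq_3)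
  moreover have roots: "poly g y = 0 \<longleftrightarrow> y = \<gamma>" for y
    using assms(3) by (auto simp: g_def)
  ultimately have "poly \<phi> y > y" if "y > \<gamma>" for y
    using poly_pos_above_roots [of g \<gamma> y] assms(2) that by (simp add: g_def)
  moreover have "poly \<phi> y < y" if "y < \<gamma>" for y
    using poly_neg_below_roots [of g \<gamma> y] \<open>degree g = 3\<close> \<open>lead_coeff g = lead_coeff \<phi>\<close> roots
      assms(2) that by (simp add: g_def)
  ultimately have "\<not> Bseq (\<lambda>n. (poly \<phi> ^^ n) x)" if "x \<noteq> \<gamma>" for x
    using orbit_unbounded_above orbit_unbounded_below that by (metis poly_isCont linorder_neqE)
  moreover have "(poly \<phi> ^^ n) \<gamma> = \<gamma>" for n
    using assms(3) by (induction n) auto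
  ultimately show ?thesis
    by (auto simp: of_real_in_filled_julia_iff elim!: Reals_cases) blast
qed

end
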